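(* Let $R$ be a real $n\times n$ payoff matrix, let $S,F$ be $n\times n$ row-stochastic matrices, and for $\lambda\in[0,1]$ set $Q(\lambda)=(1-\lambda)S+\lambda F$, $R(\lambda)=Q(\lambda)RQ(\lambda)^T$ and $\tilde R(\lambda)=R(\lambda)-\mathbf d_{R(\lambda)}\mathbf u^T$, where $\mathbf d_{R(\lambda)}$ is the column vector of diagonal entries of $R(\lambda)$ and $\mathbf u$ is the all-ones column vector. Consider the replicator dynamics on the simplex $\{x\in\mathbb R^n: x_i\ge0,\ \sum_ix_i=1\}$, $$\dot x_i=x_i\big((\tilde R(\lambda)x)_i-x^T\tilde R(\lambda)x\big),\quad i=1,\dots,n,$$ with mean fitness $\phi(x,\lambda)=x^T\tilde R(\lambda)x$. Let $\tilde{\mathbf x}$ be an interior fixed point of these dynamics at parameter value $\lambda^c\in[0,1]$, i.e. $\tilde x_i>0$ for all $i$, and suppose $\lambda^c$ is a balanced bifurcation parameter value of $\tilde{\mathbf x}$, i.e. $\phi(\tilde{\mathbf x},\lambda^c)=0$. Then $\det\tilde R(\lambda^c)=0$.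
   Context: A value $\lambda\in[0,1]$ with $\det\tilde R(\lambda)=0$ is called a singular point of the incompetent game $\tilde R(\lambda)$. $Q(\lambda)$ is the incompetence matrix ($(i,j)$ entry = probability of executing strategy $j$ when strategy $i$ is selected). *)

theory Defs
  imports "HOL-Analysis.Analysis"
begin

definition row_stochastic :: "real^'n^'n \<Rightarrow> bool" where
  "row_stochastic A \<longleftrightarrow> (\<forall>i j. A $ i $ j \<ge> 0) \<and> (\<forall>i. (\<Sum>j\<in>UNIV. A $ i $ j) = 1)"

definition incomp_Q :: "real^'n^'n \<Rightarrow> real^'n^'n \<Rightarrow> real \<Rightarrow> real^'n^'n" where
  "incomp_Q S F l = (1 - l) *\<^sub>R S + l *\<^sub>R F"

definition incomp_R :: "real^'n^'n \<Rightarrow> real^'n^'n \<Rightarrow> real^'n^'n \<Rightarrow> real \<Rightarrow> real^'n^'n" where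
  "incomp_R R S F l = incomp_Q S F l ** R ** transpose (incomp_Q S F l)"

text \<open>Rtilde(lambda) = R(lambda) - d u^T, i.e. entry (i,j) is R(lambda)_ij - R(lambda)_ii.\<close>
definition incomp_Rt :: "real^'n^'n \<Rightarrow> real^'n^'n \<Rightarrow> real^'n^'n \<Rightarrow> real \<Rightarrow> real^'n^'n" where
  "incomp_Rt R S F l = (\<chi> i j. incomp_R R S F l $ i $ j - incomp_R R S F l $ i $ i)"

definition mean_fitness :: "real^'n^'n \<Rightarrow> real^'n^'n \<Rightarrow> real^'n^'n \<Rightarrow> real^'n \<Rightarrow> real \<Rightarrow> real" where
  "mean_fitness R S F x l = x \<bullet> (incomp_Rt R S F l *v x)"

definition replicator_field :: "real^'n^'n \<Rightarrow> real^'n^'n \<Rightarrow> real^'n^'n \<Rightarrow> real \<Rightarrow> real^'n \<Rightarrow> real^'n" where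
  "replicator_field R S F l x =
     (\<chi> i. x $ i * ((incomp_Rt R S F l *v x) $ i - mean_fitness R S F x l))"

definition prob_simplex :: "(real^'n) set" where
  "prob_simplex = {x. (\<forall>i. x $ i \<ge> 0) \<and> (\<Sum>i\<in>UNIV. x $ i) = 1}"

end

theory Submission
  imports Defs
begin

text \<open>At an interior rest point no coordinate factor vanishes, so every fitness equals
  the mean fitness; when that is zero, the rest point itself is a nonzero kernel vector.\<close>

lemma det_eq_zero_if_mulv_eq_zero:
  fixes A :: "'a::field^'n^'n" and x :: "'a^'n"
  assumes "A *v x = 0" and "x \<noteq> 0"
  shows "det A = 0"
proof -
  have "\<not> invertible A"
    using assms matrix_left_invertible_ker invertible_left_inverse by blast
  then show ?thesis
    using invertible_det_nz by blast
qed

lemma replicator_rest_point_fitness: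
  assumes "replicator_field R S F l x = 0" and "x $ i \<noteq> 0"
  shows "(incomp_Rt R S F l *v x) $ i = mean_fitness R S F x l"
proof -
  have "x $ i * ((incomp_Rt R S F l *v x) $ i - mean_fitness R S F x l) = 0"
    using assms(1) unfolding replicator_field_def vec_eq_iff by simp
  then show ?thesis
    using assms(2) by simp
qed

lemma interior_balanced_rest_point_in_kernel:
  assumes "\<forall>i. x $ i > 0" and "replicator_field R S F l x = 0"
    and "mean_fitness R S F x l = 0"
  shows "incomp_Rt R S F l *v x = 0"
  using assms replicator_rest_point_fitness[of R S F l x]
  by (simp add: vec_eq_iff less_imp_neq[symmetric])

theorem lemma2:
  fixes R S F :: "real^'n^'n" and x :: "real^'n" and lc :: real
  assumes "row_stochastic S" and "row_stochastic F"
    and "0 \<le> lc" and "lc \<le> 1"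
    and "x \<in> prob_simplex"
    and "\<forall>i. x $ i > 0"
    and "replicator_field R S F lc x = 0"
    and "mean_fitness R S F x lc = 0"
  shows "det (incomp_Rt R S F lc) = 0"
proof (rule det_eq_zero_if_mulv_eq_zero)
  show "incomp_Rt R S F lc *v x = 0"
    using assms(6-8) by (rule interior_balanced_rest_point_in_kernel)
  show "x \<noteq> 0"
    using assms(6) by (metis less_irrefl zero_index)
qed

end
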